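(* For an integer $n\ge 1$, let $\mathcal{P}_n$ denote the set of real algebraic polynomials of degree at most $n$, and let $$\mathcal{H}_n=\Big\{f:\ \int_0^x f(t)\,dt=e^{-x/2}p(x)\ \text{for all } x\ge 0,\ \text{for some } p\in\mathcal{P}_n \text{ with } p(0)=0\Big\}.$$ Let $c_n$ be the smallest constant such that $$\int_0^\infty\Big(\frac{1}{x}\int_0^x f(t)\,dt\Big)^2dx\le c_n\int_0^\infty f^2(x)\,dx\qquad\text{for all } f\in\mathcal{H}_n.$$ Then $$4\Big(1-\frac{2}{\ln\frac{n+1}{2}+2}\Big)\le c_n\le 4\Big(1-\frac{8}{(\ln\frac{n+1}{2}+4)^2}\Big).$$ *)

theory Defs
  imports "HOL-Analysis.Analysis" "HOL-Computational_Algebra.Polynomial"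
begin

definition H :: "nat \<Rightarrow> (real \<Rightarrow> real) set" where
  "H n = {f. \<exists>p :: real poly. degree p \<le> n \<and> poly p 0 = 0 \<and>
              (\<forall>x\<ge>0. (f has_integral (exp (- x / 2) * poly p x)) {0..x})}"

definition hardy_const :: "nat \<Rightarrow> real" where
  "hardy_const n = Inf {C. \<forall>f\<in>H n.
      integral {0<..} (\<lambda>x. ((1 / x) * integral {0..x} f)\<^sup>2)
        \<le> C * integral {0<..} (\<lambda>x. (f x)\<^sup>2)}"

end

theory Submission
  imports Defs
begin

text \<open>If \<open>f \<in> H n\<close>, its primitive is \<open>e\<^sup>-\<^sup>x\<^sup>/\<^sup>2 x q(x)\<close> with \<open>deg q < n\<close>, and \<open>f\<close> itself is determined
  almost everywhere by it. Expanding \<open>q = \<Sum>\<^sub>k a\<^sub>k L\<^sub>k\<close> in the Laguerre polynomials, which are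
  orthonormal for the weight \<open>e\<^sup>-\<^sup>x\<close> on \<open>(0, \<infinity>)\<close>, the left side of the Hardy inequality becomes
  \<open>A = \<Sum> a\<^sub>k\<^sup>2\<close>; since \<open>(e\<^sup>-\<^sup>x\<^sup>/\<^sup>2 x L\<^sub>k)' = e\<^sup>-\<^sup>x\<^sup>/\<^sup>2 (L\<^sub>k - k L\<^sub>k\<^sub>-\<^sub>1 + (k + 1) L\<^sub>k\<^sub>+\<^sub>1) / 2\<close>, the right side becomes
  \<open>(A + R) / 4\<close> with \<open>R = \<Sum> K\<^sub>j\<^sup>2\<close>, \<open>K\<^sub>j = (j + 1) a\<^sub>j\<^sub>+\<^sub>1 - j a\<^sub>j\<^sub>-\<^sub>1\<close>, the cross term vanishing by
  skew-symmetry. So \<open>c\<^sub>n\<close> is the supremum of \<open>4 A / (A + R)\<close>. The \<open>K\<^sub>j\<close> split into two chains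
  (even and odd indices), each a first-order recursion solved by explicit products; Cauchy--Schwarz
  then gives \<open>A \<le> (L\<^sup>2/8 + L + 1) R\<close> with \<open>L = ln ((n + 1) / 2)\<close>, the upper bound, while the
  sequence \<open>a\<^sub>2\<^sub>m = p\<^sub>m (M - m)\<close>, built from the products \<open>p\<^sub>m\<close> of the even chain, satisfies
  \<open>L R \<le> 2 A\<close>, the lower bound.\<close>

section \<open>The discrete upper bound\<close>

lemma ln_add_one_ge_pade:
  fixes x :: real
  assumes "0 \<le> x"
  shows "2 * x / (2 + x) \<le> ln (1 + x)"
proof -
  let ?g = "\<lambda>t::real. ln (1 + t) - 2 * t / (2 + t)"
  have "?g 0 \<le> ?g x"
  proof (rule DERIV_nonneg_imp_nondecreasing[OF assms])
    fix t :: real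
    assume t: "0 \<le> t" "t \<le> x"
    have "DERIV ?g t :> (1 / (1 + t) - (2 * (2 + t) - 2 * t) / (2 + t)\<^sup>2)"
      using t by (auto intro!: derivative_eq_intros simp: power2_eq_square)
    moreover have "1 / (1 + t) - (2 * (2 + t) - 2 * t) / (2 + t)\<^sup>2 = t\<^sup>2 / ((1 + t) * (2 + t)\<^sup>2)"
      using t by (simp add: divide_simps power2_eq_square) (simp add: algebra_simps)
    ultimately show "\<exists>y. DERIV ?g t :> y \<and> 0 \<le> y"
      using t by fastforce
  qed
  then show ?thesis by simp
qed

lemma ln_Suc_diff_ge:
  assumes "N \<ge> 1"
  shows "1 / (real N + 1/2) \<le> ln (real N + 1) - ln (real N)"
proof -
  have "1 / (real N + 1/2) = 2 * (1 / real N) / (2 + 1 / real N)"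
    using assms by (simp add: field_simps)
  also have "\<dots> \<le> ln (1 + 1 / real N)"
    by (rule ln_add_one_ge_pade) simp
  also have "\<dots> = ln (real N + 1) - ln (real N)"
    using assms ln_div[of "real N + 1" "real N"] by (simp add: field_simps)
  finally show ?thesis .
qed

definition chain_coeff :: "nat \<Rightarrow> real" where
  "chain_coeff k = (4 * real k + 1) / (2 * real k + 1)\<^sup>2"

definition harm4 :: "nat \<Rightarrow> real" where
  "harm4 k = (\<Sum>m\<in>{1..k}. 1 / (4 * real m + 1))"

definition chain_col :: "nat \<Rightarrow> real" where
  "chain_col k = (if k = 0 then 1 else chain_coeff k * (4/5 + harm4 k))"

definition chain_const :: "nat \<Rightarrow> real" where
  "chain_const N = (\<Sum>k<N. chain_col k)"

definition chain_bound :: "real \<Rightarrow> real" where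
  "chain_bound x = (ln x)\<^sup>2 / 8 + ln x + 1"

lemma chain_coeff_le_ln_diff:
  assumes "N \<ge> 1"
  shows "chain_coeff N \<le> ln (real N + 1) - ln (real N)"
proof -
  have "chain_coeff N \<le> 1 / (real N + 1/2)"
    unfolding chain_coeff_def by (simp add: divide_simps power2_eq_square) (simp add: algebra_simps)
  also have "\<dots> \<le> ln (real N + 1) - ln (real N)"
    using ln_Suc_diff_ge[OF assms] .
  finally show ?thesis .
qed

lemma harm4_le:
  assumes "N \<ge> 1"
  shows "harm4 N \<le> 1/5 + ln (real N) / 4"
  using assms
proof (induction N rule: dec_induct)
  case base
  then show ?case by (simp add: harm4_def)
next
  case (step N)
  have "1 / (4 * real (Suc N) + 1) \<le> (1 / (real N + 1/2)) / 4"
    by (simp add: field_simps)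
  also have "\<dots> \<le> (ln (real N + 1) - ln (real N)) / 4"
    using ln_Suc_diff_ge[OF step(1)] by (rule divide_right_mono) simp
  finally have "harm4 (Suc N) \<le> harm4 N + (ln (real N + 1) - ln (real N)) / 4"
    by (simp add: harm4_def)
  moreover have "real (Suc N) = real N + 1"
    by simp
  ultimately show ?case
    using step(3) by (simp only:) (simp add: field_simps)
qed

lemma chain_const_le_chain_bound:
  assumes "N \<ge> 1"
  shows "chain_const N \<le> chain_bound (real N)"
  using assms
proof (induction N rule: dec_induct)
  case base
  then show ?case by (simp add: chain_const_def chain_col_def chain_bound_def)
next
  case (step N)
  let ?a = "ln (real N)" and ?b = "ln (real N + 1)"
  have "?a \<le> ?b"
    using step(1) by simp
  have "chain_col N = chain_coeff N * (4/5 + harm4 N)"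
    using step(1) by (simp add: chain_col_def)
  also have "\<dots> \<le> (?b - ?a) * (1 + ?a / 4)"
  proof (rule mult_mono)
    show "chain_coeff N \<le> ?b - ?a"
      by (rule chain_coeff_le_ln_diff[OF step(1)])
    show "4/5 + harm4 N \<le> 1 + ?a / 4"
      using harm4_le[OF step(1)] by simp
    show "0 \<le> 4/5 + harm4 N"
      unfolding harm4_def by (intro add_nonneg_nonneg sum_nonneg) auto
  qed (use \<open>?a \<le> ?b\<close> in simp)
  also have "\<dots> \<le> chain_bound (real N + 1) - chain_bound (real N)"
  proof -
    have "chain_bound (real N + 1) - chain_bound (real N) = (?b - ?a) * ((?b + ?a) / 8 + 1)"
      by (simp add: chain_bound_def field_simps power2_eq_square)
    moreover have "(?b - ?a) * (1 + ?a / 4) \<le> (?b - ?a) * ((?b + ?a) / 8 + 1)"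
      using \<open>?a \<le> ?b\<close> by (intro mult_left_mono) auto
    ultimately show ?thesis by simp
  qed
  moreover have "chain_const (Suc N) = chain_const N + chain_col N"
    by (simp add: chain_const_def)
  ultimately show ?case
    using step(3) by (simp add: add.commute)
qed

lemma chain_bound_mono:
  assumes "1 \<le> x" "x \<le> y"
  shows "chain_bound x \<le> chain_bound y"
proof -
  have "0 \<le> ln x" "ln x \<le> ln y"
    using assms by simp_all
  then show ?thesis
    unfolding chain_bound_def by (smt (verit) divide_right_mono power_mono)
qed

lemma chain_bound_nonneg: "1 \<le> x \<Longrightarrow> 0 \<le> chain_bound x"
  unfolding chain_bound_def by simp

text \<open>The solution of the homogeneous recursion \<open>(2m + r + 2) b (m + 1) = (2m + r + 1) b m\<close>
  with \<open>b 0 = 1\<close>.\<close>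
fun chain_prod :: "real \<Rightarrow> nat \<Rightarrow> real" where
  "chain_prod r 0 = 1"
| "chain_prod r (Suc m) = chain_prod r m * (2 * real m + r + 1) / (2 * real m + r + 2)"

lemma chain_prod_pos: "0 \<le> r \<Longrightarrow> chain_prod r m > 0"
  by (induction m) auto

lemma chain_prod_Suc_mult:
  "0 \<le> r \<Longrightarrow> (2 * real m + r + 2) * chain_prod r (Suc m) = (2 * real m + r + 1) * chain_prod r m"
  by simp

lemma chain_prod_sq_mono:
  assumes "0 \<le> r" "m \<le> k"
  shows "(chain_prod r m)\<^sup>2 * (4 * real m + 2 * r + 1) \<le> (chain_prod r k)\<^sup>2 * (4 * real k + 2 * r + 1)"
  using assms(2)
proof (induction k rule: dec_induct)
  case (step k)
  define x where "x = 2 * real k + r + 1"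
  have "x \<ge> 1"
    using assms(1) by (simp add: x_def)
  have "(2 * x - 1) * (x + 1)\<^sup>2 \<le> x\<^sup>2 * (2 * x + 3)"
    by (simp add: power2_eq_square algebra_simps)
  then have "(2 * x - 1) * (x + 1)\<^sup>2 * (chain_prod r k)\<^sup>2 \<le> x\<^sup>2 * (2 * x + 3) * (chain_prod r k)\<^sup>2"
    by (rule mult_right_mono) simp
  then have "(chain_prod r k)\<^sup>2 * (2 * x - 1) \<le> (chain_prod r k * x / (x + 1))\<^sup>2 * (2 * x + 3)"
    using \<open>x \<ge> 1\<close> by (simp add: power_divide power_mult_distrib field_simps)
  moreover have "chain_prod r (Suc k) = chain_prod r k * x / (x + 1)"
    by (simp add: x_def add_ac)
  ultimately show ?case
    using step.IH by (simp add: x_def algebra_simps)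
qed simp

lemma chain_prod_0_sq_antimono:
  assumes "m \<le> k"
  shows "(chain_prod 0 k)\<^sup>2 * (2 * real k + 1) \<le> (chain_prod 0 m)\<^sup>2 * (2 * real m + 1)"
  using assms
proof (induction k rule: dec_induct)
  case (step k)
  define y where "y = 2 * real k + 1"
  have "y \<ge> 1"
    by (simp add: y_def)
  have "y\<^sup>2 * (y + 2) \<le> y * (y + 1)\<^sup>2"
    using \<open>y \<ge> 1\<close> by (simp add: power2_eq_square algebra_simps)
  then have "y\<^sup>2 * (y + 2) * (chain_prod 0 k)\<^sup>2 \<le> y * (y + 1)\<^sup>2 * (chain_prod 0 k)\<^sup>2"
    by (rule mult_right_mono) simp
  then have "(chain_prod 0 k * y / (y + 1))\<^sup>2 * (y + 2) \<le> (chain_prod 0 k)\<^sup>2 * y"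
    using \<open>y \<ge> 1\<close> by (simp add: power_divide power_mult_distrib field_simps)
  moreover have "chain_prod 0 (Suc k) = chain_prod 0 k * y / (y + 1)"
    by (simp add: y_def add_ac)
  ultimately show ?case
    using step.IH by (simp add: y_def algebra_simps)
qed simp

lemma chain_coeff_ge:
  assumes "2 * real k + 1 \<le> x"
  shows "(2 * x - 1) / x\<^sup>2 \<le> chain_coeff k"
proof -
  let ?y = "2 * real k + 1"
  have "(2 * ?y - 1) * x\<^sup>2 - (2 * x - 1) * ?y\<^sup>2 = (x - ?y) * (x * (?y - 1) + ?y * (x - 1))"
    by (simp add: power2_eq_square algebra_simps)
  moreover have "(x - ?y) * (x * (?y - 1) + ?y * (x - 1)) \<ge> 0"
    using assms by (intro mult_nonneg_nonneg add_nonneg_nonneg) auto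
  ultimately have "(2 * x - 1) * ?y\<^sup>2 \<le> (2 * ?y - 1) * x\<^sup>2"
    by linarith
  then show ?thesis
    using assms by (simp add: chain_coeff_def field_simps)
qed

definition chain_weight :: "real \<Rightarrow> nat \<Rightarrow> nat \<Rightarrow> real" where
  "chain_weight r m k = (chain_prod r m / ((2 * real k + r + 1) * chain_prod r k))\<^sup>2"

lemma chain_prod_ratio_le_chain_coeff:
  assumes "0 \<le> r" "j \<le> k"
  shows "(chain_prod r j)\<^sup>2 * (4 * real j + 2 * r + 1) / ((2 * real k + r + 1) * chain_prod r k)\<^sup>2
    \<le> chain_coeff k"
proof -
  define x where "x = 2 * real k + r + 1"
  have "chain_prod r k > 0"
    using assms(1) by (rule chain_prod_pos)
  have "(chain_prod r j)\<^sup>2 * (4 * real j + 2 * r + 1) / (x * chain_prod r k)\<^sup>2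
      \<le> (chain_prod r k)\<^sup>2 * (2 * x - 1) / (x * chain_prod r k)\<^sup>2"
    using chain_prod_sq_mono[OF assms] by (intro divide_right_mono) (auto simp: x_def algebra_simps)
  also have "\<dots> = (2 * x - 1) / x\<^sup>2"
    using \<open>chain_prod r k > 0\<close> by (simp add: power_mult_distrib)
  also have "\<dots> \<le> chain_coeff k"
    using assms(1) by (intro chain_coeff_ge) (simp add: x_def)
  finally show ?thesis
    by (simp add: x_def)
qed

lemma chain_weight_le:
  assumes "0 \<le> r" "m \<le> k"
  shows "chain_weight r m k \<le> chain_coeff k / (4 * real m + 1)"
proof -
  have "chain_weight r m k * (4 * real m + 1) \<le> chain_weight r m k * (4 * real m + 2 * r + 1)"
    using assms(1) by (intro mult_left_mono) (simp_all add: chain_weight_def)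
  also have "\<dots> \<le> chain_coeff k"
    using chain_prod_ratio_le_chain_coeff[OF assms]
    by (simp add: chain_weight_def power_divide)
  finally show ?thesis
    by (simp add: le_divide_eq add_pos_nonneg)
qed

lemma chain_weight_0_le:
  assumes "0 \<le> r" "1 \<le> k"
  shows "chain_weight r 0 k \<le> 4/5 * chain_coeff k"
proof -
  let ?q = "(chain_prod r 1)\<^sup>2 * (2 * r + 5)"
  have "?q > 0"
    using assms(1) chain_prod_pos by (intro mult_pos_pos) auto
  have "1 / ?q \<le> 4/5"
  proof -
    have "4 * ((r + 1)\<^sup>2 * (2 * r + 5)) - 5 * (r + 2)\<^sup>2 = r * (8 * r\<^sup>2 + 31 * r + 28)"
      by (simp add: power2_eq_square algebra_simps)
    then have "5 * (r + 2)\<^sup>2 \<le> 4 * ((r + 1)\<^sup>2 * (2 * r + 5))"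
      using assms(1) by (smt (verit) mult_nonneg_nonneg zero_le_power2)
    moreover have "1 / ?q = (r + 2)\<^sup>2 / ((r + 1)\<^sup>2 * (2 * r + 5))"
      by (simp add: power_divide)
    moreover have "(r + 1)\<^sup>2 * (2 * r + 5) > 0"
      using assms(1) by (simp add: add_pos_nonneg)
    ultimately show ?thesis
      by (simp add: divide_le_eq)
  qed
  have "chain_weight r 0 k = ?q / ((2 * real k + r + 1) * chain_prod r k)\<^sup>2 * (1 / ?q)"
    using \<open>?q > 0\<close> assms(1) by (simp add: chain_weight_def power_one_over)
  also have "\<dots> \<le> chain_coeff k * (4/5)"
    using chain_prod_ratio_le_chain_coeff[OF assms] \<open>?q > 0\<close> \<open>1 / ?q \<le> 4/5\<close>
    by (intro mult_mono) (simp_all add: ac_simps chain_coeff_def)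
  finally show ?thesis
    by simp
qed

lemma sum_chain_weight_le_chain_col:
  assumes "0 \<le> r"
  shows "(\<Sum>m\<le>k. chain_weight r m k) \<le> chain_col k"
proof (cases "k = 0")
  case True
  have "(r + 1)\<^sup>2 \<ge> 1"
    using assms by (intro one_le_power) simp
  then show ?thesis
    using True by (simp add: chain_weight_def chain_col_def add.commute power_divide divide_le_eq_1)
next
  case False
  have "(\<Sum>m\<le>k. chain_weight r m k) = chain_weight r 0 k + (\<Sum>m\<in>{1..k}. chain_weight r m k)"
    by (simp add: atMost_atLeast0 sum.atLeast_Suc_atMost)
  also have "\<dots> \<le> 4/5 * chain_coeff k + (\<Sum>m\<in>{1..k}. chain_coeff k / (4 * real m + 1))"
    using False by (intro add_mono chain_weight_0_le[OF assms] sum_mono chain_weight_le[OF assms]) auto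
  also have "\<dots> = chain_col k"
    using False by (simp add: chain_col_def harm4_def sum_distrib_left algebra_simps)
  finally show ?thesis .
qed

text \<open>Dividing by \<open>chain_prod\<close> turns the recursion into a telescoping sum.\<close>
lemma chain_sum_repr:
  assumes "0 \<le> r" "\<forall>m\<ge>N. b m = 0" "m \<le> N"
  shows "b m = - (\<Sum>k=m..<N. chain_prod r m / ((2 * real k + r + 1) * chain_prod r k)
                   * ((2 * real k + r + 2) * b (Suc k) - (2 * real k + r + 1) * b k))"
proof -
  define c where "c k = b k / chain_prod r k" for k
  have pos: "chain_prod r k > 0" "2 * real k + r + 1 > 0" for k
    using assms(1) chain_prod_pos by (auto simp: add_pos_nonneg)
  have step: "((2 * real k + r + 2) * b (Suc k) - (2 * real k + r + 1) * b k)
      / ((2 * real k + r + 1) * chain_prod r k) = c (Suc k) - c k" for k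
  proof -
    have "(2 * real k + r + 2) * b (Suc k) = (2 * real k + r + 2) * chain_prod r (Suc k) * c (Suc k)"
      using pos[of "Suc k"] by (simp add: c_def del: chain_prod.simps)
    also have "\<dots> = (2 * real k + r + 1) * chain_prod r k * c (Suc k)"
      using chain_prod_Suc_mult[OF assms(1), of k] by (simp only:)
    moreover have "b k = chain_prod r k * c k"
      using pos[of k] by (simp add: c_def)
    ultimately have "(2 * real k + r + 2) * b (Suc k) - (2 * real k + r + 1) * b k
        = (2 * real k + r + 1) * chain_prod r k * (c (Suc k) - c k)"
      by (simp add: algebra_simps)
    then show ?thesis
      using pos[of k] by simp
  qed
  have "(\<Sum>k=m..<N. chain_prod r m / ((2 * real k + r + 1) * chain_prod r k)
          * ((2 * real k + r + 2) * b (Suc k) - (2 * real k + r + 1) * b k))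
      = chain_prod r m * (\<Sum>k=m..<N. c (Suc k) - c k)"
    by (simp add: sum_distrib_left step[symmetric])
  also have "\<dots> = chain_prod r m * (c N - c m)"
    using assms(3) by (simp only: sum_Suc_diff')
  also have "\<dots> = - b m"
    using assms(2) pos(1)[of m] by (simp add: c_def)
  finally show ?thesis
    by simp
qed

lemma sum_sq_le_chain_const:
  assumes "0 \<le> r" "\<forall>m\<ge>N. b m = 0"
  shows "(\<Sum>m<N. (b m)\<^sup>2)
    \<le> chain_const N * (\<Sum>m<N. ((2 * real m + r + 2) * b (Suc m) - (2 * real m + r + 1) * b m)\<^sup>2)"
proof -
  define s where "s k = (2 * real k + r + 2) * b (Suc k) - (2 * real k + r + 1) * b k" for k
  let ?S = "\<Sum>m<N. (s m)\<^sup>2"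
  have "(b m)\<^sup>2 \<le> (\<Sum>k=m..<N. chain_weight r m k) * ?S" if "m < N" for m
  proof -
    have "(b m)\<^sup>2 = (\<Sum>k=m..<N. chain_prod r m / ((2 * real k + r + 1) * chain_prod r k) * s k)\<^sup>2"
      using chain_sum_repr[OF assms, of m] that by (simp add: s_def)
    also have "\<dots> \<le> (\<Sum>k=m..<N. chain_weight r m k) * (\<Sum>k=m..<N. (s k)\<^sup>2)"
      unfolding chain_weight_def by (rule Cauchy_Schwarz_ineq_sum)
    also have "\<dots> \<le> (\<Sum>k=m..<N. chain_weight r m k) * ?S"
      by (intro mult_left_mono sum_mono2 sum_nonneg) (auto simp: chain_weight_def)
    finally show ?thesis .
  qed
  then have "(\<Sum>m<N. (b m)\<^sup>2) \<le> (\<Sum>m<N. (\<Sum>k=m..<N. chain_weight r m k) * ?S)"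
    by (intro sum_mono) simp
  also have "\<dots> = (\<Sum>m<N. \<Sum>k=m..<N. chain_weight r m k) * ?S"
    by (simp add: sum_distrib_right)
  also have "(\<Sum>m<N. \<Sum>k=m..<N. chain_weight r m k)
      = (\<Sum>m<N. \<Sum>k\<in>{k. k \<in> {..<N} \<and> m \<le> k}. chain_weight r m k)"
    by (intro sum.cong) auto
  also have "\<dots> = (\<Sum>k<N. \<Sum>m\<in>{m. m \<in> {..<N} \<and> m \<le> k}. chain_weight r m k)"
    by (rule sum.swap_restrict) auto
  also have "\<dots> = (\<Sum>k<N. \<Sum>m\<le>k. chain_weight r m k)"
    by (intro sum.cong) auto
  also have "\<dots> \<le> chain_const N"
    unfolding chain_const_def by (intro sum_mono sum_chain_weight_le_chain_col[OF assms(1)])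
  finally show ?thesis
    by (simp add: s_def mult_right_mono sum_nonneg)
qed

text \<open>At \<open>j = 0\<close> the truncated index \<open>j - 1\<close> is harmless: its factor \<open>real j\<close> vanishes.\<close>
definition skew_diff :: "(nat \<Rightarrow> real) \<Rightarrow> nat \<Rightarrow> real" where
  "skew_diff a j = real (Suc j) * a (Suc j) - real j * a (j - 1)"

lemma skew_diff_eq_0:
  assumes "\<forall>i\<ge>n. a i = 0" "n < j"
  shows "skew_diff a j = 0"
  using assms by (simp add: skew_diff_def)

lemma sum_sq_le_skew_diff_parity:
  fixes a :: "nat \<Rightarrow> real" and r :: nat
  assumes "n \<ge> 1" "\<forall>i\<ge>n. a i = 0"
  shows "(\<Sum>m<n. (a (2 * m + r))\<^sup>2)
    \<le> chain_bound ((real n + 1) / 2) * (\<Sum>m<n. (skew_diff a (2 * m + r + 1))\<^sup>2)"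
proof -
  define N where "N = (n + 1) div 2"
  define b where "b m = a (2 * m + r)" for m
  have N: "N \<ge> 1" "N \<le> n" "2 * real N \<le> real n + 1"
    using assms(1) by (auto simp: N_def)
  have b0: "\<forall>m\<ge>N. b m = 0"
    using assms(2) by (auto simp: b_def N_def)
  have skew: "skew_diff a (2 * m + r + 1)
      = (2 * real m + real r + 2) * b (Suc m) - (2 * real m + real r + 1) * b m" for m
    by (simp add: skew_diff_def b_def algebra_simps)
  have "(\<Sum>m<n. (a (2 * m + r))\<^sup>2) = (\<Sum>m<N. (b m)\<^sup>2)"
    using N(2) b0 unfolding b_def by (intro sum.mono_neutral_right) auto
  also have "\<dots> \<le> chain_const N * (\<Sum>m<N. (skew_diff a (2 * m + r + 1))\<^sup>2)"
    unfolding skew by (rule sum_sq_le_chain_const[OF _ b0]) simp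
  also have "\<dots> \<le> chain_bound ((real n + 1) / 2) * (\<Sum>m<n. (skew_diff a (2 * m + r + 1))\<^sup>2)"
  proof (intro mult_mono sum_mono2 sum_nonneg)
    have "chain_const N \<le> chain_bound (real N)"
      by (rule chain_const_le_chain_bound[OF N(1)])
    also have "\<dots> \<le> chain_bound ((real n + 1) / 2)"
      using N by (intro chain_bound_mono) auto
    finally show "chain_const N \<le> chain_bound ((real n + 1) / 2)" .
    show "0 \<le> chain_bound ((real n + 1) / 2)"
      using assms(1) by (intro chain_bound_nonneg) simp
  qed (use N in auto)
  finally show ?thesis .
qed

lemma sum_sq_le_skew_diff:
  fixes a :: "nat \<Rightarrow> real"
  assumes "n \<ge> 1" "\<forall>i\<ge>n. a i = 0"
  shows "(\<Sum>i<n. (a i)\<^sup>2) \<le> chain_bound ((real n + 1) / 2) * (\<Sum>j\<le>n. (skew_diff a j)\<^sup>2)"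
proof -
  let ?B = "chain_bound ((real n + 1) / 2)" and ?K = "\<lambda>j. (skew_diff a j)\<^sup>2"
  have "(\<Sum>i<n. (a i)\<^sup>2) = (\<Sum>i<2 * n. (a i)\<^sup>2)"
    using assms(2) by (intro sum.mono_neutral_left) auto
  also have "\<dots> = (\<Sum>m<n. (a (2 * m + 0))\<^sup>2) + (\<Sum>m<n. (a (2 * m + 1))\<^sup>2)"
    using sum_split_even_odd[where f = "\<lambda>i. (a i)\<^sup>2" and g = "\<lambda>i. (a i)\<^sup>2"] by simp
  also have "\<dots> \<le> ?B * (\<Sum>m<n. ?K (2 * m + 0 + 1)) + ?B * (\<Sum>m<n. ?K (2 * m + 1 + 1))"
    by (intro add_mono sum_sq_le_skew_diff_parity[OF assms])
  also have "\<dots> = ?B * (\<Sum>j<2 * n. ?K (Suc j))"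
    using sum_split_even_odd[where f = "\<lambda>j. ?K (Suc j)" and g = "\<lambda>j. ?K (Suc j)"] by (simp add: distrib_left)
  also have "\<dots> \<le> ?B * (?K 0 + (\<Sum>j<2 * n. ?K (Suc j)))"
    using assms(1) by (intro mult_left_mono chain_bound_nonneg) simp_all
  also have "?K 0 + (\<Sum>j<2 * n. ?K (Suc j)) = (\<Sum>j<Suc (2 * n). ?K j)"
    by (rule sum.lessThan_Suc_shift[symmetric])
  also have "(\<Sum>j<Suc (2 * n). ?K j) = (\<Sum>j\<le>n. ?K j)"
    using skew_diff_eq_0[OF assms(2)] by (intro sum.mono_neutral_right) auto
  finally show ?thesis .
qed

section \<open>The discrete lower bound\<close>

lemma sum_odd_sq_chain_prod_le:
  "(\<Sum>m<M. ((2 * real m + 1) * chain_prod 0 m)\<^sup>2)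
    \<le> (chain_prod 0 M)\<^sup>2 * (4 * real M + 1) * (\<Sum>m<M. (2 * real m + 1)\<^sup>2 / (4 * real m + 1))"
proof -
  have "((2 * real m + 1) * chain_prod 0 m)\<^sup>2
      \<le> (chain_prod 0 M)\<^sup>2 * (4 * real M + 1) * ((2 * real m + 1)\<^sup>2 / (4 * real m + 1))"
    if "m \<in> {..<M}" for m
  proof -
    have "(chain_prod 0 m)\<^sup>2 * (4 * real m + 1) \<le> (chain_prod 0 M)\<^sup>2 * (4 * real M + 1)"
      using chain_prod_sq_mono[of 0 m M] that by simp
    then have "(chain_prod 0 m)\<^sup>2 \<le> (chain_prod 0 M)\<^sup>2 * (4 * real M + 1) / (4 * real m + 1)"
      by (simp add: le_divide_eq)
    then have "(2 * real m + 1)\<^sup>2 * (chain_prod 0 m)\<^sup>2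
        \<le> (2 * real m + 1)\<^sup>2 * ((chain_prod 0 M)\<^sup>2 * (4 * real M + 1) / (4 * real m + 1))"
      by (rule mult_left_mono) simp
    then show ?thesis
      by (simp add: power_mult_distrib ac_simps)
  qed
  then have "(\<Sum>m<M. ((2 * real m + 1) * chain_prod 0 m)\<^sup>2)
      \<le> (\<Sum>m<M. (chain_prod 0 M)\<^sup>2 * (4 * real M + 1) * ((2 * real m + 1)\<^sup>2 / (4 * real m + 1)))"
    by (rule sum_mono)
  then show ?thesis
    by (simp only: sum_distrib_left)
qed

lemma sum_odd_sq_div_le:
  assumes "M \<ge> 1"
  shows "(\<Sum>m<M. (2 * real m + 1)\<^sup>2 / (4 * real m + 1)) \<le> (real M)\<^sup>2 / 2 + 3 * real M / 10 + 1/5"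
  using assms
proof (induction M rule: dec_induct)
  case (step M)
  have "(2 * real M + 1)\<^sup>2 \<le> (real M + 4/5) * (4 * real M + 1)"
  proof -
    have "(real M + 4/5) * (4 * real M + 1) - (2 * real M + 1)\<^sup>2 = real M / 5 - 1/5"
      by (simp add: power2_eq_square algebra_simps)
    then show ?thesis
      using step.hyps by simp
  qed
  then have "(2 * real M + 1)\<^sup>2 / (4 * real M + 1) \<le> real M + 4/5"
    by (simp add: divide_le_eq)
  with step.IH have "(\<Sum>m<Suc M. (2 * real m + 1)\<^sup>2 / (4 * real m + 1))
      \<le> ((real M)\<^sup>2 / 2 + 3 * real M / 10 + 1/5) + (real M + 4/5)"
    by simp
  also have "\<dots> = (real (Suc M))\<^sup>2 / 2 + 3 * real (Suc M) / 10 + 1/5"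
    by (simp add: power2_eq_square field_simps)
  finally show ?case .
qed simp

lemma sum_inverse_odd_ge:
  assumes "M \<ge> 1"
  shows "3/4 + ln (real M + 1/2) / 2 \<le> (\<Sum>m<M. 1 / (2 * real m + 1))"
  using assms
proof (induction M rule: dec_induct)
  case base
  have "ln (1 + 1/2 :: real) \<le> 1/2"
    by (rule ln_add_one_self_le_self) simp
  then show ?case
    by simp
next
  case (step M)
  have "(real M + 1/2) * (1 + 1 / (real M + 1/2)) = real (Suc M) + 1/2"
    by (simp add: field_simps)
  moreover have "ln ((real M + 1/2) * (1 + 1 / (real M + 1/2)))
      = ln (real M + 1/2) + ln (1 + 1 / (real M + 1/2))"
    by (intro ln_mult_pos) (auto intro: add_pos_pos)
  ultimately have "ln (real (Suc M) + 1/2) = ln (real M + 1/2) + ln (1 + 1 / (real M + 1/2))"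
    by simp
  moreover have "ln (1 + 1 / (real M + 1/2)) \<le> 1 / (real M + 1/2)"
    by (rule ln_add_one_self_le_self) simp
  ultimately have "ln (real (Suc M) + 1/2) / 2 \<le> ln (real M + 1/2) / 2 + 1 / (2 * real M + 1)"
    by (simp add: field_simps)
  then show ?case
    using step.IH by simp
qed

lemma sum_sq_chain_prod_ge:
  "(chain_prod 0 M)\<^sup>2 * (2 * real M + 1)
     * ((real M + 1/2)\<^sup>2 * (\<Sum>m<M. 1 / (2 * real m + 1)) - 3/4 * (real M)\<^sup>2 - real M / 2)
    \<le> (\<Sum>m<M. (chain_prod 0 m * (real M - real m))\<^sup>2)"
proof -
  have "(\<Sum>m<M. (real M - real m)\<^sup>2 / (2 * real m + 1))
      = (\<Sum>m<M. (real M + 1/2)\<^sup>2 * (1 / (2 * real m + 1)) - (real M + 1/2) + (2 * real m + 1) / 4)"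
    by (intro sum.cong) (simp_all add: field_simps power2_eq_square)
  also have "\<dots> = (real M + 1/2)\<^sup>2 * (\<Sum>m<M. 1 / (2 * real m + 1)) - real M * (real M + 1/2)
      + (\<Sum>m<M. (2 * real m + 1) / 4)"
    by (simp add: sum.distrib sum_subtractf sum_distrib_left)
  also have "(\<Sum>m<M. (2 * real m + 1) / 4) = (real M)\<^sup>2 / 4"
    by (induction M) (simp_all add: power2_eq_square field_simps)
  also have "(real M + 1/2)\<^sup>2 * (\<Sum>m<M. 1 / (2 * real m + 1)) - real M * (real M + 1/2) + (real M)\<^sup>2 / 4
      = (real M + 1/2)\<^sup>2 * (\<Sum>m<M. 1 / (2 * real m + 1)) - 3/4 * (real M)\<^sup>2 - real M / 2"
    by (simp add: power2_eq_square field_simps)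
  finally have S: "(real M + 1/2)\<^sup>2 * (\<Sum>m<M. 1 / (2 * real m + 1)) - 3/4 * (real M)\<^sup>2 - real M / 2
      = (\<Sum>m<M. (real M - real m)\<^sup>2 / (2 * real m + 1))" ..
  have "(chain_prod 0 M)\<^sup>2 * (2 * real M + 1) * ((real M - real m)\<^sup>2 / (2 * real m + 1))
      \<le> (chain_prod 0 m * (real M - real m))\<^sup>2" if "m \<in> {..<M}" for m
  proof -
    have "(chain_prod 0 M)\<^sup>2 * (2 * real M + 1) / (2 * real m + 1) \<le> (chain_prod 0 m)\<^sup>2"
      using chain_prod_0_sq_antimono[of m M] that by (simp add: divide_le_eq)
    then have "(chain_prod 0 M)\<^sup>2 * (2 * real M + 1) / (2 * real m + 1) * (real M - real m)\<^sup>2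
        \<le> (chain_prod 0 m)\<^sup>2 * (real M - real m)\<^sup>2"
      by (rule mult_right_mono) simp
    then show ?thesis
      by (simp add: power_mult_distrib)
  qed
  then have "(\<Sum>m<M. (chain_prod 0 M)\<^sup>2 * (2 * real M + 1) * ((real M - real m)\<^sup>2 / (2 * real m + 1)))
      \<le> (\<Sum>m<M. (chain_prod 0 m * (real M - real m))\<^sup>2)"
    by (rule sum_mono)
  then show ?thesis
    unfolding S by (simp only: sum_distrib_left)
qed

lemma hardy_lower_poly_ineq:
  fixes X L H :: real
  assumes "X \<ge> 1" "L \<ge> 0" "H \<ge> L / 2 + 3/4"
  shows "L * ((4 * X + 1) * (X\<^sup>2 / 2 + 3 * X / 10 + 1/5))
    \<le> 2 * ((2 * X + 1) * ((X + 1/2)\<^sup>2 * H - 3/4 * X\<^sup>2 - X / 2))"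
proof -
  have "2 * ((2 * X + 1) * ((X + 1/2)\<^sup>2 * (L / 2 + 3/4) - 3/4 * X\<^sup>2 - X / 2))
        - L * ((4 * X + 1) * (X\<^sup>2 / 2 + 3 * X / 10 + 1/5))
      = L * (13/10 * X\<^sup>2 + 2/5 * X + 1/20) + 2 * (2 * X + 1) * (X / 4 + 3/16)"
    by (simp add: power2_eq_square field_simps)
  moreover have "L * (13/10 * X\<^sup>2 + 2/5 * X + 1/20) + 2 * (2 * X + 1) * (X / 4 + 3/16) \<ge> 0"
    using assms by (intro add_nonneg_nonneg mult_nonneg_nonneg) auto
  moreover have "(X + 1/2)\<^sup>2 * (L / 2 + 3/4) \<le> (X + 1/2)\<^sup>2 * H"
    using assms by (intro mult_left_mono) auto
  moreover have "2 * X + 1 \<ge> 0"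
    using assms by simp
  ultimately show ?thesis
    by (smt (verit) mult_left_mono)
qed

lemma ln_mul_sum_odd_sq_chain_prod_le:
  assumes "M \<ge> 1"
  shows "ln (real M + 1/2) * (\<Sum>m<M. ((2 * real m + 1) * chain_prod 0 m)\<^sup>2)
    \<le> 2 * (\<Sum>m<M. (chain_prod 0 m * (real M - real m))\<^sup>2)"
proof -
  let ?g = "(chain_prod 0 M)\<^sup>2" and ?L = "ln (real M + 1/2)"
    and ?H = "\<Sum>m<M. 1 / (2 * real m + 1)"
  have "real M \<ge> 1" "?L \<ge> 0"
    using assms by simp_all
  have "(\<Sum>m<M. ((2 * real m + 1) * chain_prod 0 m)\<^sup>2)
      \<le> ?g * (4 * real M + 1) * ((real M)\<^sup>2 / 2 + 3 * real M / 10 + 1/5)"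
    using sum_odd_sq_chain_prod_le[of M] mult_left_mono[OF sum_odd_sq_div_le[OF assms], of "?g * (4 * real M + 1)"]
    by simp
  then have "?L * (\<Sum>m<M. ((2 * real m + 1) * chain_prod 0 m)\<^sup>2)
      \<le> ?L * (?g * (4 * real M + 1) * ((real M)\<^sup>2 / 2 + 3 * real M / 10 + 1/5))"
    using \<open>?L \<ge> 0\<close> by (rule mult_left_mono)
  also have "\<dots> = ?g * (?L * ((4 * real M + 1) * ((real M)\<^sup>2 / 2 + 3 * real M / 10 + 1/5)))"
    by simp
  also have "\<dots> \<le> ?g * (2 * ((2 * real M + 1)
                   * ((real M + 1/2)\<^sup>2 * ?H - 3/4 * (real M)\<^sup>2 - real M / 2)))"
    using \<open>real M \<ge> 1\<close> \<open>?L \<ge> 0\<close> sum_inverse_odd_ge[OF assms]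
    by (intro mult_left_mono hardy_lower_poly_ineq) auto
  also have "\<dots> \<le> 2 * (\<Sum>m<M. (chain_prod 0 m * (real M - real m))\<^sup>2)"
    using sum_sq_chain_prod_ge[of M] by (simp add: mult.assoc)
  finally show ?thesis .
qed

definition extremal_seq :: "nat \<Rightarrow> nat \<Rightarrow> real" where
  "extremal_seq M i =
     (if even i \<and> i div 2 < M then chain_prod 0 (i div 2) * (real M - real (i div 2)) else 0)"

lemma extremal_seq_eq_0:
  assumes "2 * M \<le> n + 1" "n \<le> i"
  shows "extremal_seq M i = 0"
  using assms by (auto simp: extremal_seq_def elim!: evenE)

lemma skew_diff_extremal_seq_even: "skew_diff (extremal_seq M) (2 * m) = 0"
  by (simp add: skew_diff_def extremal_seq_def)

lemma skew_diff_extremal_seq_odd: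
  "skew_diff (extremal_seq M) (2 * m + 1) = (if m < M then - ((2 * real m + 1) * chain_prod 0 m) else 0)"
proof -
  have "skew_diff (extremal_seq M) (2 * m + 1)
      = (2 * real m + 2) * extremal_seq M (2 * Suc m) - (2 * real m + 1) * extremal_seq M (2 * m)"
    by (simp add: skew_diff_def algebra_simps)
  also have "\<dots> = (if m < M then (2 * real m + 2) * chain_prod 0 (Suc m) * (real M - real m - 1)
                      - (2 * real m + 1) * chain_prod 0 m * (real M - real m) else 0)"
    by (auto simp: extremal_seq_def)
  also have "\<dots> = (if m < M then - ((2 * real m + 1) * chain_prod 0 m) else 0)"
    using chain_prod_Suc_mult[of 0 m] by (simp add: algebra_simps)
  finally show ?thesis .
qed

lemma sum_sq_extremal_seq:
  assumes "2 * M \<le> n + 1" "M \<le> n"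
  shows "(\<Sum>i<n. (extremal_seq M i)\<^sup>2) = (\<Sum>m<M. (chain_prod 0 m * (real M - real m))\<^sup>2)"
proof -
  have "(\<Sum>i<n. (extremal_seq M i)\<^sup>2) = (\<Sum>i<2 * n. (extremal_seq M i)\<^sup>2)"
    using extremal_seq_eq_0[OF assms(1)] by (intro sum.mono_neutral_left) auto
  also have "\<dots> = (\<Sum>m<n. (extremal_seq M (2 * m))\<^sup>2)"
    using sum_split_even_odd[where f = "\<lambda>i. (extremal_seq M i)\<^sup>2" and g = "\<lambda>i. (extremal_seq M i)\<^sup>2"]
    by (simp add: extremal_seq_def)
  also have "\<dots> = (\<Sum>m<M. (chain_prod 0 m * (real M - real m))\<^sup>2)"
    using assms(2) by (intro sum.mono_neutral_cong_right) (auto simp: extremal_seq_def)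
  finally show ?thesis .
qed

lemma sum_sq_skew_diff_extremal_seq:
  assumes "2 * M \<le> n + 1" "M \<le> n"
  shows "(\<Sum>j\<le>n. (skew_diff (extremal_seq M) j)\<^sup>2) = (\<Sum>m<M. ((2 * real m + 1) * chain_prod 0 m)\<^sup>2)"
proof -
  let ?K = "\<lambda>j. (skew_diff (extremal_seq M) j)\<^sup>2"
  have "(\<Sum>j\<le>n. ?K j) = (\<Sum>j<2 * n + 2. ?K j)"
    using skew_diff_eq_0[of n "extremal_seq M"] extremal_seq_eq_0[OF assms(1)]
    by (intro sum.mono_neutral_left) auto
  also have "\<dots> = (\<Sum>m<Suc n. ?K (2 * m + 1))"
    using sum_split_even_odd[where f = ?K and g = ?K and n = "Suc n"]
    by (simp add: skew_diff_extremal_seq_even)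
  also have "\<dots> = (\<Sum>m<M. ((2 * real m + 1) * chain_prod 0 m)\<^sup>2)"
    using assms(2) by (intro sum.mono_neutral_cong_right) (auto simp: skew_diff_extremal_seq_odd[simplified])
  finally show ?thesis .
qed

lemma exists_seq_skew_diff_small:
  assumes "n \<ge> 1"
  shows "\<exists>a. (\<forall>i\<ge>n. a i = 0) \<and> 0 < (\<Sum>i<n. (a i)\<^sup>2)
    \<and> ln ((real n + 1) / 2) * (\<Sum>j\<le>n. (skew_diff a j)\<^sup>2) \<le> 2 * (\<Sum>i<n. (a i)\<^sup>2)"
proof (intro exI conjI allI impI)
  define M where "M = (n + 1) div 2"
  have M: "M \<ge> 1" "M \<le> n" "2 * M \<le> n + 1" "(real n + 1) / 2 \<le> real M + 1/2"
    using assms by (auto simp: M_def)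
  show "extremal_seq M i = 0" if "n \<le> i" for i
    using extremal_seq_eq_0[OF M(3) that] .
  have "0 < (chain_prod 0 0 * (real M - real 0))\<^sup>2"
    using M(1) by simp
  also have "\<dots> \<le> (\<Sum>m<M. (chain_prod 0 m * (real M - real m))\<^sup>2)"
    using M(1) by (intro member_le_sum) auto
  finally show "0 < (\<Sum>i<n. (extremal_seq M i)\<^sup>2)"
    unfolding sum_sq_extremal_seq[OF M(3,2)] .
  have "ln ((real n + 1) / 2) \<le> ln (real M + 1/2)"
    using M(4) by simp
  then have "ln ((real n + 1) / 2) * (\<Sum>m<M. ((2 * real m + 1) * chain_prod 0 m)\<^sup>2)
      \<le> ln (real M + 1/2) * (\<Sum>m<M. ((2 * real m + 1) * chain_prod 0 m)\<^sup>2)"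
    by (intro mult_right_mono sum_nonneg) auto
  also have "\<dots> \<le> 2 * (\<Sum>m<M. (chain_prod 0 m * (real M - real m))\<^sup>2)"
    by (rule ln_mul_sum_odd_sq_chain_prod_le[OF M(1)])
  finally show "ln ((real n + 1) / 2) * (\<Sum>j\<le>n. (skew_diff (extremal_seq M) j)\<^sup>2)
      \<le> 2 * (\<Sum>i<n. (extremal_seq M i)\<^sup>2)"
    unfolding sum_sq_extremal_seq[OF M(3,2)] sum_sq_skew_diff_extremal_seq[OF M(3,2)] .
qed

section \<open>Laguerre polynomials\<close>

text \<open>\<open>exp_moment p\<close> is \<open>\<integral>\<^sub>0\<^sup>\<infinity> e\<^sup>-\<^sup>x p(x) dx\<close>, computed from \<open>\<integral>\<^sub>0\<^sup>\<infinity> x\<^sup>i e\<^sup>-\<^sup>x dx = i!\<close>.\<close>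
definition exp_moment :: "real poly \<Rightarrow> real" where
  "exp_moment p = (\<Sum>i\<le>degree p. coeff p i * fact i)"

lemma exp_moment_eq:
  assumes "degree p < N"
  shows "exp_moment p = (\<Sum>i<N. coeff p i * fact i)"
  unfolding exp_moment_def using assms
  by (intro sum.mono_neutral_left) (auto simp: coeff_eq_0)

lemma exp_moment_add: "exp_moment (p + q) = exp_moment p + exp_moment q"
proof -
  define N where "N = Suc (max (degree p) (degree q))"
  have "degree (p + q) < N" "degree p < N" "degree q < N"
    using degree_add_le_max[of p q] by (auto simp: N_def)
  then show ?thesis
    by (simp add: exp_moment_eq sum.distrib algebra_simps)
qed

lemma exp_moment_smult: "exp_moment (smult c p) = c * exp_moment p"
  using exp_moment_eq[of "smult c p" "Suc (degree p)"] exp_moment_eq[of p "Suc (degree p)"]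
  by (simp add: sum_distrib_left algebra_simps)

lemma exp_moment_0 [simp]: "exp_moment 0 = 0"
  by (simp add: exp_moment_def)

lemma exp_moment_sum: "exp_moment (\<Sum>x\<in>A. f x) = (\<Sum>x\<in>A. exp_moment (f x))"
  by (induction A rule: infinite_finite_induct) (simp_all add: exp_moment_add)

lemma exp_moment_monom: "exp_moment (monom c m) = c * fact m"
  using exp_moment_eq[of "monom c m" "Suc m"]
  by (simp add: degree_monom_le le_imp_less_Suc coeff_monom sum.delta')

definition laguerre_coeff :: "nat \<Rightarrow> nat \<Rightarrow> real" where
  "laguerre_coeff k i = (-1) ^ i * real (k choose i) / fact i"

definition laguerre :: "nat \<Rightarrow> real poly" where
  "laguerre k = (\<Sum>i\<le>k. monom (laguerre_coeff k i) i)"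

lemma laguerre_coeff_eq_0: "k < i \<Longrightarrow> laguerre_coeff k i = 0"
  by (simp add: laguerre_coeff_def binomial_eq_0)

lemma coeff_laguerre: "coeff (laguerre k) i = laguerre_coeff k i"
proof -
  have "coeff (laguerre k) i = (\<Sum>j\<le>k. if j = i then laguerre_coeff k j else 0)"
    unfolding laguerre_def coeff_sum by (simp add: coeff_monom)
  then show ?thesis
    by (simp add: sum.delta' laguerre_coeff_eq_0)
qed

text \<open>The inner sum is a Chu--Vandermonde convolution.\<close>
lemma sum_laguerre_coeff_mult_fact:
  "(\<Sum>l\<le>k. laguerre_coeff k l * fact (i + l)) = fact i * ((real k - real i - 1) gchoose k)"
proof -
  have "laguerre_coeff k l * fact (i + l) = fact i * (((- real i - 1) gchoose l) * (real k gchoose (k - l)))"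
    if "l \<le> k" for l
  proof -
    have "fact l * fact (i + l - l) * ((i + l) choose l) = fact (i + l)"
      by (rule binomial_fact_lemma) simp
    then have fact: "(fact (i + l) :: real) = fact l * fact i * real ((i + l) choose l)"
      by (metis add_diff_cancel_right' of_nat_fact of_nat_mult)
    have neg: "((- real i - 1) gchoose l) = (-1) ^ l * real ((i + l) choose l)"
      by (simp add: gbinomial_negated_upper[of "- real i - 1"] binomial_gbinomial add.commute)
    have sym: "(real k gchoose (k - l)) = real (k choose l)"
      using that by (simp add: binomial_gbinomial[symmetric] binomial_symmetric[of l k, symmetric])
    show ?thesis
      unfolding fact neg sym laguerre_coeff_def by (simp add: field_simps)
  qed
  then have "(\<Sum>l\<le>k. laguerre_coeff k l * fact (i + l))
      = fact i * (\<Sum>l\<le>k. ((- real i - 1) gchoose l) * (real k gchoose (k - l)))"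
    by (simp add: sum_distrib_left)
  also have "(\<Sum>l\<le>k. ((- real i - 1) gchoose l) * (real k gchoose (k - l))) = (real k - real i - 1) gchoose k"
    unfolding atMost_atLeast0 using gbinomial_Vandermonde[of "- real i - 1" "real k" k]
    by (simp add: algebra_simps)
  finally show ?thesis .
qed

lemma exp_moment_laguerre_mult: "exp_moment (laguerre j * laguerre k) = (if j = k then 1 else 0)"
proof -
  have le: "exp_moment (laguerre j * laguerre k) = (if j = k then 1 else 0)" if "j \<le> k" for j k
  proof -
    have G: "(real k - real i - 1) gchoose k = (if i = k then (-1) ^ k else 0)" if "i \<le> k" for i
    proof (cases "i = k")
      case True
      then show ?thesis
        using gbinomial_negated_upper[of "-1 :: real" k] by (simp add: binomial_gbinomial[symmetric])
    next
      case False
      then have "real k - real i - 1 = real (k - i - 1)"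
        using that by (simp add: of_nat_diff)
      then have "(real k - real i - 1) gchoose k = real ((k - i - 1) choose k)"
        by (simp add: binomial_gbinomial)
      then show ?thesis
        using False that by simp
    qed
    have "exp_moment (laguerre j * laguerre k)
        = (\<Sum>i\<le>j. laguerre_coeff j i * (\<Sum>l\<le>k. laguerre_coeff k l * fact (i + l)))"
      unfolding laguerre_def sum_product mult_monom exp_moment_sum exp_moment_monom
      by (simp add: sum_distrib_left mult.assoc)
    also have "\<dots> = (\<Sum>i\<le>j. if i = k then laguerre_coeff j k * (fact k * (-1) ^ k) else 0)"
      using that by (intro sum.cong) (auto simp: sum_laguerre_coeff_mult_fact G)
    also have "\<dots> = (if j = k then 1 else 0)"
      using that by (simp add: laguerre_coeff_def power_mult_distrib[symmetric])
    finally show ?thesis .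
  qed
  show ?thesis
    using le[of j k] le[of k j] by (cases "j \<le> k") (auto simp: mult.commute)
qed

lemma exp_moment_laguerre_expansion_mult:
  assumes "finite A"
  shows "exp_moment ((\<Sum>k\<in>A. smult (d k) (laguerre k)) * (\<Sum>k\<in>A. smult (e k) (laguerre k)))
    = (\<Sum>k\<in>A. d k * e k)"
proof -
  have "(\<Sum>k\<in>A. smult (d k) (laguerre k)) * (\<Sum>k\<in>A. smult (e k) (laguerre k))
      = (\<Sum>j\<in>A. \<Sum>k\<in>A. smult (d j * e k) (laguerre j * laguerre k))"
    unfolding sum_product by (simp add: mult_smult_left mult_smult_right mult.commute)
  moreover have "exp_moment (\<Sum>j\<in>A. \<Sum>k\<in>A. smult (d j * e k) (laguerre j * laguerre k))
      = (\<Sum>j\<in>A. \<Sum>k\<in>A. if j = k then d j * e k else 0)"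
    by (simp add: exp_moment_sum exp_moment_smult exp_moment_laguerre_mult) (auto intro!: sum.cong)
  ultimately show ?thesis
    using assms by (simp add: sum.delta)
qed

lemma laguerre_expansion_exists:
  fixes q :: "real poly"
  assumes "\<forall>i\<ge>n. coeff q i = 0"
  shows "\<exists>a. (\<forall>k\<ge>n. a k = 0) \<and> q = (\<Sum>k<n. smult (a k) (laguerre k))"
  using assms
proof (induction n arbitrary: q)
  case 0
  then have "q = 0"
    by (intro poly_eqI) auto
  then show ?case
    by (intro exI[of _ "\<lambda>_. 0"]) simp
next
  case (Suc n)
  define c where "c = coeff q n / laguerre_coeff n n"
  have "laguerre_coeff n n \<noteq> 0"
    by (simp add: laguerre_coeff_def)
  have "coeff (q - smult c (laguerre n)) i = 0" if "n \<le> i" for i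
  proof (cases "i = n")
    case True
    then show ?thesis
      using \<open>laguerre_coeff n n \<noteq> 0\<close> by (simp add: c_def coeff_laguerre)
  next
    case False
    then show ?thesis
      using Suc.prems that by (simp add: coeff_laguerre laguerre_coeff_eq_0)
  qed
  then have "\<forall>i\<ge>n. coeff (q - smult c (laguerre n)) i = 0"
    by blast
  from Suc.IH[OF this] obtain a where
    a: "\<forall>k\<ge>n. a k = 0" "q - smult c (laguerre n) = (\<Sum>k<n. smult (a k) (laguerre k))"
    by blast
  have "(\<Sum>k<Suc n. smult ((a(n := c)) k) (laguerre k)) = (\<Sum>k<n. smult (a k) (laguerre k)) + smult c (laguerre n)"
    by simp
  then have "q = (\<Sum>k<Suc n. smult ((a(n := c)) k) (laguerre k))"
    using a(2) by (metis diff_add_cancel)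
  then show ?case
    using a(1) by (intro exI[of _ "a(n := c)"]) auto
qed

text \<open>\<open>(e\<^sup>-\<^sup>x\<^sup>/\<^sup>2 p(x))' = e\<^sup>-\<^sup>x\<^sup>/\<^sup>2 (damped_deriv p)(x)\<close>.\<close>
definition damped_deriv :: "real poly \<Rightarrow> real poly" where
  "damped_deriv p = pderiv p - smult (1/2) p"

lemma damped_deriv_add: "damped_deriv (p + q) = damped_deriv p + damped_deriv q"
  by (simp add: damped_deriv_def pderiv_add smult_add_right)

lemma damped_deriv_smult: "damped_deriv (smult c p) = smult c (damped_deriv p)"
  by (simp add: damped_deriv_def pderiv_smult smult_diff_right)

lemma damped_deriv_0 [simp]: "damped_deriv 0 = 0"
  by (simp add: damped_deriv_def)

lemma damped_deriv_sum: "damped_deriv (\<Sum>x\<in>A. f x) = (\<Sum>x\<in>A. damped_deriv (f x))"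
  by (induction A rule: infinite_finite_induct) (simp_all add: damped_deriv_add)

lemma choose_three_term_identity:
  "2 * (real j + 2) * real (k choose Suc j) + (real j + 1) * real (k choose j)
    = real (k choose Suc j) - real k * real ((k - 1) choose Suc j) + (real k + 1) * real (Suc k choose Suc j)"
proof (cases "j < k")
  case True
  have "real (k - Suc j) = real k - real j - 1"
    using True by (simp add: of_nat_diff)
  then have "real k * real ((k - 1) choose Suc j) = (real k - real j - 1) * real (k choose Suc j)"
    using arg_cong[OF binomial_absorb_comp[of k "Suc j"], of real] unfolding of_nat_mult by simp
  moreover have "Suc j * (k choose Suc j) = (k - j) * (k choose j)"
    using binomial_absorption[of j k] binomial_absorb_comp[of k j] by simp
  then have "real (Suc j) * real (k choose Suc j) = real (k - j) * real (k choose j)"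
    by (metis of_nat_mult)
  then have "(real j + 1) * real (k choose Suc j) = (real k - real j) * real (k choose j)"
    using True by (simp add: of_nat_diff algebra_simps)
  ultimately show ?thesis
    by (simp add: algebra_simps)
next
  case False
  then show ?thesis
    by (cases "j = k") (simp_all add: binomial_eq_0)
qed

lemma damped_deriv_X_mult_laguerre:
  "damped_deriv ([:0, 1:] * laguerre k)
    = smult (1/2) (laguerre k) - smult (real k / 2) (laguerre (k - 1))
      + smult ((real k + 1) / 2) (laguerre (k + 1))"
proof (rule poly_eqI)
  fix i
  have lhs: "coeff (damped_deriv ([:0, 1:] * laguerre k)) i
      = (real i + 1) * laguerre_coeff k i - (if i = 0 then 0 else laguerre_coeff k (i - 1) / 2)"
    by (cases i) (simp_all add: damped_deriv_def coeff_pderiv coeff_laguerre algebra_simps)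
  show "coeff (damped_deriv ([:0, 1:] * laguerre k)) i
      = coeff (smult (1/2) (laguerre k) - smult (real k / 2) (laguerre (k - 1))
               + smult ((real k + 1) / 2) (laguerre (k + 1))) i"
  proof (cases i)
    case 0
    then show ?thesis
      unfolding lhs by (simp add: coeff_laguerre laguerre_coeff_def field_simps)
  next
    case (Suc j)
    define E where "E = (-1::real) ^ j / fact (Suc j)"
    have odd: "laguerre_coeff k' (Suc j) = - E * real (k' choose Suc j)" for k'
      by (simp add: laguerre_coeff_def E_def)
    have even: "laguerre_coeff k j = E * ((real j + 1) * real (k choose j))"
      by (simp add: laguerre_coeff_def E_def divide_simps)
    have key: "(real j + 2) * real (k choose Suc j) + (real j + 1) * real (k choose j) / 2
        = real (k choose Suc j) / 2 - real k * real ((k - 1) choose Suc j) / 2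
          + (real k + 1) * real (Suc k choose Suc j) / 2"
      using choose_three_term_identity[of j k] by (simp add: field_simps)
    have "(real (Suc j) + 1) * laguerre_coeff k (Suc j) - laguerre_coeff k j / 2
        = - E * ((real j + 2) * real (k choose Suc j) + (real j + 1) * real (k choose j) / 2)"
      unfolding odd even by (simp add: algebra_simps)
    also have "\<dots> = laguerre_coeff k (Suc j) / 2 - real k / 2 * laguerre_coeff (k - 1) (Suc j)
        + (real k + 1) / 2 * laguerre_coeff (Suc k) (Suc j)"
      unfolding key odd by (simp add: field_simps)
    finally show ?thesis
      unfolding lhs unfolding Suc by (simp add: coeff_laguerre)
  qed
qed

lemma sum_mult_skew_diff_eq_0:
  assumes "\<forall>k\<ge>n. a k = 0"
  shows "(\<Sum>j\<le>n. a j * skew_diff a j) = 0"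
proof (cases n)
  case 0
  then show ?thesis
    using assms by (simp add: skew_diff_def)
next
  case (Suc m)
  have "(\<Sum>j\<le>n. a j * (real (Suc j) * a (Suc j))) = (\<Sum>j\<le>m. real (Suc j) * a j * a (Suc j))"
    using assms Suc by (simp add: algebra_simps)
  moreover have "(\<Sum>j\<le>n. a j * (real j * a (j - 1))) = (\<Sum>j\<le>m. real (Suc j) * a j * a (Suc j))"
    unfolding Suc by (subst sum.atMost_Suc_shift) (simp add: algebra_simps)
  ultimately show ?thesis
    by (simp add: skew_diff_def right_diff_distrib sum_subtractf)
qed

lemma damped_deriv_X_mult_laguerre_sum:
  assumes "\<forall>k\<ge>n. a k = 0"
  shows "damped_deriv ([:0, 1:] * (\<Sum>k<n. smult (a k) (laguerre k)))
    = (\<Sum>j\<le>n. smult ((a j - skew_diff a j) / 2) (laguerre j))"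
proof -
  have "damped_deriv ([:0, 1:] * (\<Sum>k<n. smult (a k) (laguerre k)))
      = (\<Sum>k<n. smult (a k / 2) (laguerre k)) - (\<Sum>k<n. smult (a k * real k / 2) (laguerre (k - 1)))
        + (\<Sum>k<n. smult (a k * (real k + 1) / 2) (laguerre (k + 1)))"
    unfolding sum_distrib_left mult_smult_right damped_deriv_sum damped_deriv_smult
      damped_deriv_X_mult_laguerre
    by (simp add: sum.distrib sum_subtractf smult_add_right smult_diff_right)
  also have "(\<Sum>k<n. smult (a k / 2) (laguerre k)) = (\<Sum>j\<le>n. smult (a j / 2) (laguerre j))"
    using assms by (intro sum.mono_neutral_left) auto
  also have "(\<Sum>k<n. smult (a k * real k / 2) (laguerre (k - 1)))
      = (\<Sum>j\<le>n. smult (a (Suc j) * real (Suc j) / 2) (laguerre j))"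
  proof -
    have "(\<Sum>k<n. smult (a k * real k / 2) (laguerre (k - 1)))
        = (\<Sum>k\<le>Suc n. smult (a k * real k / 2) (laguerre (k - 1)))"
      using assms by (intro sum.mono_neutral_left) auto
    then show ?thesis
      by (simp add: sum.atMost_Suc_shift del: sum.atMost_Suc)
  qed
  also have "(\<Sum>k<n. smult (a k * (real k + 1) / 2) (laguerre (k + 1)))
      = (\<Sum>j\<le>n. smult (a (j - 1) * real j / 2) (laguerre j))"
    by (simp add: sum.atMost_shift add.commute)
  also have "(\<Sum>j\<le>n. smult (a j / 2) (laguerre j)) - (\<Sum>j\<le>n. smult (a (Suc j) * real (Suc j) / 2) (laguerre j))
      + (\<Sum>j\<le>n. smult (a (j - 1) * real j / 2) (laguerre j))
      = (\<Sum>j\<le>n. smult ((a j - skew_diff a j) / 2) (laguerre j))"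
    unfolding sum_subtractf[symmetric] sum.distrib[symmetric]
    by (intro sum.cong refl)
      (simp add: skew_diff_def smult_diff_left[symmetric] smult_add_left[symmetric] field_simps)
  finally show ?thesis .
qed

lemma exp_moment_laguerre_sum_sq:
  "exp_moment ((\<Sum>k<n. smult (a k) (laguerre k)) * (\<Sum>k<n. smult (a k) (laguerre k))) = (\<Sum>k<n. (a k)\<^sup>2)"
  by (simp add: exp_moment_laguerre_expansion_mult power2_eq_square)

lemma exp_moment_damped_deriv_sq:
  assumes "\<forall>k\<ge>n. a k = 0"
  defines "p \<equiv> damped_deriv ([:0, 1:] * (\<Sum>k<n. smult (a k) (laguerre k)))"
  shows "exp_moment (p * p) = ((\<Sum>k<n. (a k)\<^sup>2) + (\<Sum>j\<le>n. (skew_diff a j)\<^sup>2)) / 4"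
proof -
  have "exp_moment (p * p) = (\<Sum>j\<le>n. ((a j - skew_diff a j) / 2)\<^sup>2)"
    unfolding p_def damped_deriv_X_mult_laguerre_sum[OF assms(1)]
    by (simp add: exp_moment_laguerre_expansion_mult power2_eq_square)
  also have "\<dots> = ((\<Sum>j\<le>n. (a j)\<^sup>2) + (\<Sum>j\<le>n. (skew_diff a j)\<^sup>2) - 2 * (\<Sum>j\<le>n. a j * skew_diff a j)) / 4"
    by (simp add: sum_divide_distrib[symmetric] sum.distrib sum_subtractf sum_distrib_left
        power2_eq_square algebra_simps)
  also have "(\<Sum>j\<le>n. (a j)\<^sup>2) = (\<Sum>k<n. (a k)\<^sup>2)"
    using assms(1) by (intro sum.mono_neutral_right) auto
  finally show ?thesis
    by (simp add: sum_mult_skew_diff_eq_0[OF assms(1)])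
qed

section \<open>Functions with vanishing interval integrals\<close>

lemma has_integral_0_subinterval:
  fixes h :: "real \<Rightarrow> real"
  assumes h: "\<forall>x\<ge>0. (h has_integral 0) {0..x}" and "0 \<le> c" "c \<le> d"
  shows "(h has_integral 0) {c..d}"
proof -
  have "(h has_integral 0) {0..d}"
    using h assms(2,3) by simp
  then have "h integrable_on {0..d}"
    by blast
  then have "h integrable_on {c..d}"
    by (rule integrable_subinterval_real) (use assms in auto)
  moreover have "integral {0..c} h + integral {c..d} h = integral {0..d} h"
    using \<open>h integrable_on {0..d}\<close> assms(2,3) by (intro Henstock_Kurzweil_Integration.integral_combine) auto
  moreover have "integral {0..c} h = 0" "integral {0..d} h = 0"
    using h assms(2,3) by (auto intro: integral_unique)
  ultimately show ?thesis
    by (metis add_0 integrable_integral)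
qed

lemma absolutely_integrable_if_interval_integrals_0:
  fixes h :: "real \<Rightarrow> real"
  assumes h: "\<forall>x\<ge>0. (h has_integral 0) {0..x}" and "0 \<le> N"
  shows "h absolutely_integrable_on {0..N}"
proof -
  have "h absolutely_integrable_on cbox 0 N"
  proof (rule bounded_variation_absolutely_integrable_interval[where B = 0])
    show "h integrable_on cbox 0 N"
      using h assms(2) by (auto simp: integrable_on_def)
    fix d
    assume d: "d division_of cbox 0 N"
    have "integral K h = 0" if K: "K \<in> d" for K
    proof -
      obtain c e where "K = cbox c e" "K \<noteq> {}" "K \<subseteq> cbox 0 N"
        using division_ofD(2)[OF d K] division_ofD(3)[OF d K] division_ofD(4)[OF d K] by metis
      then have "(h has_integral 0) {c..e}"
        by (intro has_integral_0_subinterval[OF h]) auto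
      then show ?thesis
        using \<open>K = cbox c e\<close> by (simp add: integral_unique)
    qed
    then show "(\<Sum>K\<in>d. norm (integral K h)) \<le> 0"
      by simp
  qed
  then show ?thesis
    by simp
qed

lemma emeasure_density_greaterThan:
  fixes R :: "real \<Rightarrow> real"
  assumes [measurable]: "R \<in> borel_measurable lborel" and "integrable lborel R" "\<And>x. R x \<ge> 0"
  shows "emeasure (density lborel R) {a<..} = ennreal (\<integral>x. indicator {a<..} x * R x \<partial>lborel)"
proof -
  have "emeasure (density lborel R) {a<..} = (\<integral>\<^sup>+ x. ennreal (R x) * indicator {a<..} x \<partial>lborel)"
    by (rule emeasure_density) auto
  also have "\<dots> = (\<integral>\<^sup>+ x. ennreal (indicator {a<..} x * R x) \<partial>lborel)"
    by (intro nn_integral_cong) (auto split: split_indicator)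
  also have "\<dots> = ennreal (\<integral>x. indicator {a<..} x * R x \<partial>lborel)"
    using assms integrable_mult_indicator[of "{a<..}" lborel R]
    by (intro nn_integral_eq_integral) (auto split: split_indicator)
  finally show ?thesis .
qed

text \<open>The positive and negative parts of \<open>u\<close> are densities of two finite measures that agree
  on all half lines, hence coincide.\<close>
lemma AE_eq_0_if_half_line_integrals_0:
  fixes u :: "real \<Rightarrow> real"
  assumes [measurable]: "u \<in> borel_measurable lborel" and "integrable lborel u"
    and half: "\<And>a. (\<integral>x. indicator {a<..} x * u x \<partial>lborel) = 0"
  shows "AE x in lborel. u x = 0"
proof -
  define P where "P x = max 0 (u x)" for x
  define Q where "Q x = max 0 (- u x)" for x
  have [measurable]: "P \<in> borel_measurable lborel" "Q \<in> borel_measurable lborel"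
    unfolding P_def Q_def by measurable
  have int: "integrable lborel P" "integrable lborel Q"
    unfolding P_def Q_def using assms(2) by (auto intro!: integrable_max integrable_minus)
  have "(\<integral>x. indicator {a<..} x * P x \<partial>lborel) = (\<integral>x. indicator {a<..} x * Q x \<partial>lborel)" for a
  proof -
    have "(\<integral>x. indicator {a<..} x * P x \<partial>lborel) - (\<integral>x. indicator {a<..} x * Q x \<partial>lborel)
        = (\<integral>x. indicator {a<..} x * P x - indicator {a<..} x * Q x \<partial>lborel)"
      using int integrable_mult_indicator[of "{a<..}" lborel P] integrable_mult_indicator[of "{a<..}" lborel Q]
      by (intro Bochner_Integration.integral_diff[symmetric]) auto
    also have "\<dots> = (\<integral>x. indicator {a<..} x * u x \<partial>lborel)"
      by (intro Bochner_Integration.integral_cong) (auto simp: P_def Q_def split: split_indicator)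
    finally show ?thesis
      using half[of a] by simp
  qed
  then have "emeasure (density lborel P) {a<..} = emeasure (density lborel Q) {a<..}"
    and "emeasure (density lborel P) {a<..} < \<infinity>" for a
    using emeasure_density_greaterThan[of P a] emeasure_density_greaterThan[of Q a] int
    by (simp_all add: P_def Q_def)
  then have "density lborel P = density lborel Q"
    by (intro measure_eqI_lessThan) auto
  then have "AE x in lborel. ennreal (P x) = ennreal (Q x)"
    by (intro sigma_finite_measure.density_unique[OF sigma_finite_lborel]) auto
  then show ?thesis
    by eventually_elim (auto simp: P_def Q_def max_def split: if_splits)
qed

lemma negligible_nonzero_if_half_line_integrals_0:
  fixes u :: "real \<Rightarrow> real"
  assumes u: "integrable lebesgue u" and half: "\<And>a. integral {a<..} u = 0"
  shows "negligible {x. u x \<noteq> 0}"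
proof -
  have u_meas: "u \<in> borel_measurable lebesgue"
    using u by (rule borel_measurable_integrable)
  obtain v where v [measurable]: "v \<in> borel_measurable lborel" and uv: "AE x in lborel. u x = v x"
    using completion_ex_borel_measurable_real[OF u_meas] by blast
  have uv': "AE x in lebesgue. u x = v x"
    using uv by (rule AE_completion)
  have v': "v \<in> borel_measurable lebesgue"
    using v by (rule measurable_completion)
  have "integrable lebesgue v"
    using u integrable_cong_AE[OF u_meas v' uv'] by simp
  then have "integrable lborel v"
    using integrable_completion by (metis v sets_lborel)
  moreover have "(\<integral>x. indicator {a<..} x * v x \<partial>lborel) = 0" for a
  proof -
    have ind: "(indicator {a<..} :: real \<Rightarrow> real) \<in> borel_measurable lebesgue"
      by (rule measurable_completion) simp
    have "(\<integral>x. indicator {a<..} x * v x \<partial>lborel) = (\<integral>x. indicator {a<..} x * v x \<partial>lebesgue)"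
      using v by (intro integral_completion[symmetric]) measurable
    also have "\<dots> = (LINT x:{a<..} | lebesgue. u x)"
      unfolding set_lebesgue_integral_def using uv' ind v' u_meas
      by (intro integral_cong_AE borel_measurable_times) (auto elim!: AE_mp)
    also have "\<dots> = integral {a<..} u"
      using u integrable_mult_indicator[of "{a<..}" lebesgue u]
      by (intro set_lebesgue_integral_eq_integral(2)) (simp add: set_integrable_def)
    finally show ?thesis
      using half by simp
  qed
  ultimately have "AE x in lborel. v x = 0"
    using v by (intro AE_eq_0_if_half_line_integrals_0) auto
  with uv have "AE x in lborel. u x = 0"
    by eventually_elim simp
  then obtain Z where Z: "{x. u x \<noteq> 0} \<subseteq> Z" "emeasure lborel Z = 0" "Z \<in> sets borel"
    by (auto elim!: AE_E)
  then have "negligible Z"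
    by (auto intro: null_setsI simp: negligible_iff_null_sets null_sets_completionI)
  with Z(1) show ?thesis
    by (rule negligible_subset[rotated])
qed

lemma has_integral_0_inter_half_line:
  fixes h :: "real \<Rightarrow> real"
  assumes h: "\<forall>x\<ge>0. (h has_integral 0) {0..x}" and "0 \<le> N"
  shows "(h has_integral 0) ({0..N} \<inter> {a<..})"
proof (cases "0 \<le> a \<and> a \<le> N")
  case True
  have "(h has_integral 0) {a..N}"
    using True by (intro has_integral_0_subinterval[OF h]) auto
  moreover have "(h has_integral 0) {a..N} \<longleftrightarrow> (h has_integral 0) {a<..N}"
    by (rule has_integral_spike_set_eq) (auto intro: negligible_subset[of "{a}"])
  moreover have "{0..N} \<inter> {a<..} = {a<..N}"
    using True by auto
  ultimately show ?thesis
    by simp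
next
  case False
  then have "{0..N} \<inter> {a<..} = {0..N} \<or> {0..N} \<inter> {a<..} = {}"
    by auto
  then show ?thesis
    using h assms(2) by auto
qed

lemma negligible_nonzero_atLeastAtMost:
  fixes h :: "real \<Rightarrow> real"
  assumes h: "\<forall>x\<ge>0. (h has_integral 0) {0..x}" and "0 \<le> N"
  shows "negligible {x \<in> {0..N}. h x \<noteq> 0}"
proof -
  define u where "u x = (if x \<in> {0..N} then h x else 0)" for x
  have "u absolutely_integrable_on UNIV"
    unfolding u_def absolutely_integrable_restrict_UNIV
    by (rule absolutely_integrable_if_interval_integrals_0[OF assms])
  then have "integrable lebesgue u"
    by (simp add: set_integrable_def)
  moreover have "integral {a<..} u = 0" for a
    using has_integral_0_inter_half_line[OF assms, of a]
    unfolding u_def has_integral_restrict_Int[symmetric] by (rule integral_unique)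
  ultimately have "negligible {x. u x \<noteq> 0}"
    by (rule negligible_nonzero_if_half_line_integrals_0)
  then show ?thesis
    by (rule negligible_subset) (auto simp: u_def)
qed

lemma negligible_nonzero_atLeast:
  fixes h :: "real \<Rightarrow> real"
  assumes "\<forall>x\<ge>0. (h has_integral 0) {0..x}"
  shows "negligible {x. 0 \<le> x \<and> h x \<noteq> 0}"
proof (rule negligible_subset)
  show "negligible (\<Union>N::nat. {x \<in> {0..real N}. h x \<noteq> 0})"
    using negligible_nonzero_atLeastAtMost[OF assms] by (intro negligible_Union_nat) simp
  show "{x. 0 \<le> x \<and> h x \<noteq> 0} \<subseteq> (\<Union>N::nat. {x \<in> {0..real N}. h x \<noteq> 0})"
    using real_arch_simple by fastforce
qed

section \<open>Reduction to Laguerre coefficients\<close>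

lemma has_integral_power_mult_exp_neg: "((\<lambda>x::real. x ^ k * exp (- x)) has_integral fact k) {0<..}"
proof -
  have "((\<lambda>t. t powr (real k + 1 - 1) / exp t) has_integral Gamma (real k + 1)) {0..}"
    by (rule Gamma_integral_real) simp
  moreover have "Gamma (real k + 1) = fact k"
    using Gamma_fact[of k] by (simp add: add.commute)
  moreover have "((\<lambda>t. t powr real k / exp t) has_integral fact k) {0..}
      \<longleftrightarrow> ((\<lambda>t. t powr real k / exp t) has_integral fact k) {0<..}"
    by (rule has_integral_spike_set_eq) (auto intro: negligible_subset[of "{0}"])
  ultimately have "((\<lambda>t. t powr real k / exp t) has_integral fact k) {0<..}"
    by simp
  then show ?thesis
    by (rule has_integral_eq[rotated]) (simp add: powr_realpow exp_minus field_simps)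
qed

lemma has_integral_exp_moment: "((\<lambda>x. exp (- x) * poly p x) has_integral exp_moment p) {0<..}"
proof -
  have "((\<lambda>x. \<Sum>i\<le>degree p. coeff p i * (x ^ i * exp (- x))) has_integral exp_moment p) {0<..}"
    unfolding exp_moment_def
    by (intro has_integral_sum finite_atMost has_integral_mult_right has_integral_power_mult_exp_neg)
  then show ?thesis
    by (simp add: poly_altdef sum_distrib_left algebra_simps)
qed

lemma has_integral_damped_deriv:
  assumes "0 \<le> x"
  shows "((\<lambda>t. exp (- t / 2) * poly (damped_deriv p) t) has_integral
    exp (- x / 2) * poly p x - poly p 0) {0..x}"
proof -
  have "((\<lambda>t. exp (- t / 2) * poly p t) has_real_derivative exp (- t / 2) * poly (damped_deriv p) t) (at t)"
    for t
    by (auto intro!: derivative_eq_intros poly_DERIV simp: damped_deriv_def algebra_simps)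
  then show ?thesis
    using fundamental_theorem_of_calculus[OF assms, of "\<lambda>t. exp (- t / 2) * poly p t"]
    by (simp add: has_real_derivative_iff_has_vector_derivative[symmetric] has_field_derivative_at_within)
qed

lemma exp_half_mult_poly_sq: "(exp (- x / 2) * poly q x)\<^sup>2 = exp (- x) * poly (q * q) (x :: real)"
  by (simp add: power_mult_distrib power2_eq_square exp_add[symmetric])

lemma hardy_integrals_laguerre:
  fixes f :: "real \<Rightarrow> real" and a :: "nat \<Rightarrow> real" and n :: nat
  defines "q \<equiv> \<Sum>k<n. smult (a k) (laguerre k)"
  assumes a: "\<forall>k\<ge>n. a k = 0"
    and f: "\<forall>x\<ge>0. (f has_integral exp (- x / 2) * poly ([:0, 1:] * q) x) {0..x}"
  shows "integral {0<..} (\<lambda>x. ((1 / x) * integral {0..x} f)\<^sup>2) = (\<Sum>k<n. (a k)\<^sup>2)"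
    and "integral {0<..} (\<lambda>x. (f x)\<^sup>2) = ((\<Sum>k<n. (a k)\<^sup>2) + (\<Sum>j\<le>n. (skew_diff a j)\<^sup>2)) / 4"
proof -
  have "integral {0<..} (\<lambda>x. ((1 / x) * integral {0..x} f)\<^sup>2) = integral {0<..} (\<lambda>x. exp (- x) * poly (q * q) x)"
  proof (rule integral_cong)
    fix x :: real
    assume "x \<in> {0<..}"
    then have "integral {0..x} f = exp (- x / 2) * (x * poly q x)"
      using f integral_unique by fastforce
    then have "(1 / x) * integral {0..x} f = exp (- x / 2) * poly q x"
      using \<open>x \<in> {0<..}\<close> by simp
    then show "((1 / x) * integral {0..x} f)\<^sup>2 = exp (- x) * poly (q * q) x"
      by (simp only: exp_half_mult_poly_sq)
  qed
  also have "\<dots> = (\<Sum>k<n. (a k)\<^sup>2)"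
    unfolding integral_unique[OF has_integral_exp_moment] q_def by (rule exp_moment_laguerre_sum_sq)
  finally show "integral {0<..} (\<lambda>x. ((1 / x) * integral {0..x} f)\<^sup>2) = (\<Sum>k<n. (a k)\<^sup>2)" .
  define g where "g t = exp (- t / 2) * poly (damped_deriv ([:0, 1:] * q)) t" for t
  have "((\<lambda>t. f t - g t) has_integral 0) {0..x}" if "0 \<le> x" for x
    using has_integral_diff[OF f[rule_format, OF that] has_integral_damped_deriv[OF that, of "[:0, 1:] * q"]]
    by (simp add: g_def)
  then have "negligible {x. 0 \<le> x \<and> f x - g x \<noteq> 0}"
    by (intro negligible_nonzero_atLeast) auto
  then have "integral {0<..} (\<lambda>x. (f x)\<^sup>2) = integral {0<..} (\<lambda>x. (g x)\<^sup>2)"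
    by (intro integral_spike[where S = "{x. 0 \<le> x \<and> f x - g x \<noteq> 0}"]) auto
  also have "\<dots> = ((\<Sum>k<n. (a k)\<^sup>2) + (\<Sum>j\<le>n. (skew_diff a j)\<^sup>2)) / 4"
    unfolding g_def exp_half_mult_poly_sq integral_unique[OF has_integral_exp_moment] q_def
    by (rule exp_moment_damped_deriv_sq[OF a])
  finally show "integral {0<..} (\<lambda>x. (f x)\<^sup>2) = ((\<Sum>k<n. (a k)\<^sup>2) + (\<Sum>j\<le>n. (skew_diff a j)\<^sup>2)) / 4" .
qed

lemma coeff_laguerre_sum_eq_0:
  assumes "n \<le> i"
  shows "coeff (\<Sum>k<n. smult (a k) (laguerre k)) i = 0"
  using assms by (simp add: coeff_sum coeff_laguerre laguerre_coeff_eq_0)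

lemma H_obtain_laguerre_expansion:
  assumes "f \<in> H n"
  obtains a where "\<forall>k\<ge>n. a k = 0"
    and "\<forall>x\<ge>0. (f has_integral exp (- x / 2) * poly ([:0, 1:] * (\<Sum>k<n. smult (a k) (laguerre k))) x) {0..x}"
proof -
  obtain p :: "real poly" where p: "degree p \<le> n" "poly p 0 = 0"
    and f: "\<forall>x\<ge>0. (f has_integral exp (- x / 2) * poly p x) {0..x}"
    using assms unfolding H_def by blast
  obtain q where q: "p = [:0, 1:] * q"
    using p(2) by (metis dvdE minus_zero poly_eq_0_iff_dvd)
  have "\<forall>i\<ge>n. coeff q i = 0"
    using p(1) coeff_eq_0[of p "Suc _"] by (simp add: q)
  then obtain a where "\<forall>k\<ge>n. a k = 0" and "q = (\<Sum>k<n. smult (a k) (laguerre k))"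
    using laguerre_expansion_exists by blast
  with f show ?thesis
    using that unfolding q by blast
qed

lemma laguerre_expansion_in_H:
  fixes a :: "nat \<Rightarrow> real" and n :: nat
  defines "p \<equiv> [:0, 1:] * (\<Sum>k<n. smult (a k) (laguerre k))"
  shows "(\<lambda>x. exp (- x / 2) * poly (damped_deriv p) x) \<in> H n"
    and "\<forall>x\<ge>0. ((\<lambda>x. exp (- x / 2) * poly (damped_deriv p) x) has_integral exp (- x / 2) * poly p x) {0..x}"
proof -
  show "\<forall>x\<ge>0. ((\<lambda>x. exp (- x / 2) * poly (damped_deriv p) x) has_integral exp (- x / 2) * poly p x) {0..x}"
    using has_integral_damped_deriv[of _ p] by (simp add: p_def)
  moreover have "degree p \<le> n"
    unfolding p_def by (rule degree_le) (auto simp: coeff_pCons coeff_laguerre_sum_eq_0 split: nat.split)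
  moreover have "poly p 0 = 0"
    by (simp add: p_def)
  ultimately show "(\<lambda>x. exp (- x / 2) * poly (damped_deriv p) x) \<in> H n"
    unfolding H_def by blast
qed

definition discrete_admissible :: "nat \<Rightarrow> real \<Rightarrow> bool" where
  "discrete_admissible n C \<longleftrightarrow> (\<forall>a. (\<forall>k\<ge>n. a k = 0) \<longrightarrow>
     (\<Sum>k<n. (a k)\<^sup>2) \<le> C * (((\<Sum>k<n. (a k)\<^sup>2) + (\<Sum>j\<le>n. (skew_diff a j)\<^sup>2)) / 4))"

lemma hardy_admissible_iff:
  "(\<forall>f\<in>H n. integral {0<..} (\<lambda>x. ((1 / x) * integral {0..x} f)\<^sup>2) \<le> C * integral {0<..} (\<lambda>x. (f x)\<^sup>2))
    \<longleftrightarrow> discrete_admissible n C"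
  unfolding discrete_admissible_def
proof (intro iffI allI impI ballI)
  fix a :: "nat \<Rightarrow> real"
  assume adm: "\<forall>f\<in>H n. integral {0<..} (\<lambda>x. ((1 / x) * integral {0..x} f)\<^sup>2)
                    \<le> C * integral {0<..} (\<lambda>x. (f x)\<^sup>2)"
    and a: "\<forall>k\<ge>n. a k = 0"
  let ?f = "\<lambda>x. exp (- x / 2) * poly (damped_deriv ([:0, 1:] * (\<Sum>k<n. smult (a k) (laguerre k)))) x"
  have "integral {0<..} (\<lambda>x. ((1 / x) * integral {0..x} ?f)\<^sup>2) \<le> C * integral {0<..} (\<lambda>x. (?f x)\<^sup>2)"
    using adm laguerre_expansion_in_H(1) by blast
  then show "(\<Sum>k<n. (a k)\<^sup>2) \<le> C * (((\<Sum>k<n. (a k)\<^sup>2) + (\<Sum>j\<le>n. (skew_diff a j)\<^sup>2)) / 4)"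
    unfolding hardy_integrals_laguerre[OF a laguerre_expansion_in_H(2)] .
next
  fix f
  assume adm: "\<forall>a. (\<forall>k\<ge>n. a k = 0) \<longrightarrow>
          (\<Sum>k<n. (a k)\<^sup>2) \<le> C * (((\<Sum>k<n. (a k)\<^sup>2) + (\<Sum>j\<le>n. (skew_diff a j)\<^sup>2)) / 4)"
    and "f \<in> H n"
  obtain a where a: "\<forall>k\<ge>n. a k = 0"
    and f: "\<forall>x\<ge>0. (f has_integral exp (- x / 2) * poly ([:0, 1:] * (\<Sum>k<n. smult (a k) (laguerre k))) x) {0..x}"
    using \<open>f \<in> H n\<close> by (rule H_obtain_laguerre_expansion)
  show "integral {0<..} (\<lambda>x. ((1 / x) * integral {0..x} f)\<^sup>2) \<le> C * integral {0<..} (\<lambda>x. (f x)\<^sup>2)"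
    unfolding hardy_integrals_laguerre[OF a f] using adm a by blast
qed

lemma discrete_admissible_upper:
  assumes "n \<ge> 1"
  shows "discrete_admissible n (4 * (1 - 8 / (ln ((real n + 1) / 2) + 4)\<^sup>2))"
  unfolding discrete_admissible_def
proof (intro allI impI)
  fix a :: "nat \<Rightarrow> real"
  assume "\<forall>k\<ge>n. a k = 0"
  define B where "B = chain_bound ((real n + 1) / 2)"
  have "0 \<le> B"
    using assms by (simp add: B_def chain_bound_nonneg)
  have "(ln ((real n + 1) / 2) + 4)\<^sup>2 = 8 * (B + 1)"
    by (simp add: B_def chain_bound_def power2_eq_square field_simps)
  then have C: "4 * (1 - 8 / (ln ((real n + 1) / 2) + 4)\<^sup>2) = 4 * B / (B + 1)"
    using \<open>0 \<le> B\<close> by (simp add: field_simps)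
  have "(\<Sum>k<n. (a k)\<^sup>2) \<le> B * (\<Sum>j\<le>n. (skew_diff a j)\<^sup>2)"
    unfolding B_def by (rule sum_sq_le_skew_diff[OF assms \<open>\<forall>k\<ge>n. a k = 0\<close>])
  then show "(\<Sum>k<n. (a k)\<^sup>2)
      \<le> 4 * (1 - 8 / (ln ((real n + 1) / 2) + 4)\<^sup>2) * (((\<Sum>k<n. (a k)\<^sup>2) + (\<Sum>j\<le>n. (skew_diff a j)\<^sup>2)) / 4)"
    unfolding C using \<open>0 \<le> B\<close> by (simp add: field_simps)
qed

lemma discrete_admissible_lower:
  assumes "n \<ge> 1" "discrete_admissible n C"
  shows "4 * (1 - 2 / (ln ((real n + 1) / 2) + 2)) \<le> C"
proof -
  define L where "L = ln ((real n + 1) / 2)"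
  have "0 \<le> L"
    using assms(1) by (simp add: L_def)
  obtain a where "\<forall>i\<ge>n. a i = 0" and pos: "0 < (\<Sum>i<n. (a i)\<^sup>2)"
    and small: "L * (\<Sum>j\<le>n. (skew_diff a j)\<^sup>2) \<le> 2 * (\<Sum>i<n. (a i)\<^sup>2)"
    using exists_seq_skew_diff_small[OF assms(1)] unfolding L_def by blast
  define A where "A = (\<Sum>i<n. (a i)\<^sup>2)"
  define R where "R = (\<Sum>j\<le>n. (skew_diff a j)\<^sup>2)"
  have "0 < A" "0 \<le> R" "L * R \<le> 2 * A"
    using pos small by (simp_all add: A_def R_def sum_nonneg)
  have "A \<le> C * ((A + R) / 4)"
    using assms(2) \<open>\<forall>i\<ge>n. a i = 0\<close> unfolding discrete_admissible_def A_def R_def by blast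
  then have "0 < C * ((A + R) / 4)"
    using \<open>0 < A\<close> by linarith
  then have "0 < C"
    using \<open>0 < A\<close> \<open>0 \<le> R\<close> by (simp add: zero_less_mult_iff)
  have "4 * L * A \<le> C * L * (A + R)"
    using mult_left_mono[OF \<open>A \<le> C * ((A + R) / 4)\<close> \<open>0 \<le> L\<close>] by (simp add: algebra_simps)
  also have "\<dots> \<le> C * (L + 2) * A"
    using mult_left_mono[OF \<open>L * R \<le> 2 * A\<close>, of C] \<open>0 < C\<close> by (simp add: algebra_simps)
  finally have "4 * L \<le> C * (L + 2)"
    using \<open>0 < A\<close> by simp
  have "4 * (1 - 2 / (L + 2)) = 4 * L / (L + 2)"
    using \<open>0 \<le> L\<close> by (simp add: field_simps)
  also have "\<dots> \<le> C"
    using \<open>4 * L \<le> C * (L + 2)\<close> \<open>0 \<le> L\<close> by (simp add: divide_le_eq)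
  finally show ?thesis
    unfolding L_def .
qed

theorem theorem1p2:
  fixes n :: nat
  assumes "n \<ge> 1"
  shows "4 * (1 - 2 / (ln ((real n + 1) / 2) + 2)) \<le> hardy_const n
       \<and> hardy_const n \<le> 4 * (1 - 8 / (ln ((real n + 1) / 2) + 4)\<^sup>2)"
proof -
  have "hardy_const n = Inf {C. discrete_admissible n C}"
    unfolding hardy_const_def hardy_admissible_iff ..
  moreover have "4 * (1 - 2 / (ln ((real n + 1) / 2) + 2)) \<le> Inf {C. discrete_admissible n C}"
    using discrete_admissible_upper[OF assms] discrete_admissible_lower[OF assms]
    by (intro cInf_greatest) auto
  moreover have "Inf {C. discrete_admissible n C} \<le> 4 * (1 - 8 / (ln ((real n + 1) / 2) + 4)\<^sup>2)"
    using discrete_admissible_upper[OF assms] discrete_admissible_lower[OF assms]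
    by (intro cInf_lower bdd_belowI) auto
  ultimately show ?thesis
    by simp
qed

end
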